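(* Assume the Standing Setting. Let $\phi\colon\mathbb{R}^{\mathfrak d}\times[a,b]^d\to\mathbb{R}$ be locally bounded and measurable and assume that for all $r\in(0,\infty)$ $$\sup_{\theta,\vartheta\in\mathbb{R}^{\mathfrak d},\ \|\theta\|+\|\vartheta\|\le r,\ \theta\ne\vartheta}\ \sup_{x\in[a,b]^d}\frac{|\phi(\theta,x)-\phi(\vartheta,x)|}{\|\theta-\vartheta\|}<\infty.$$ Then (i) the map $\mathbb{R}^{\mathfrak d}\ni\theta\mapsto\int_{[a,b]^d}\phi(\theta,x)p(x)\,\lambda(\mathrm{d}x)\in\mathbb{R}$ is locally Lipschitz continuous, and (ii) for every $i\in\{1,\dots,H\}$ the map $\{\vartheta\in\mathbb{R}^{\mathfrak d}\colon i\notin\mathbf{D}^\vartheta\}\ni\theta\mapsto\int_{I_i^\theta}\phi(\theta,x)p(x)\,\lambda(\mathrm{d}x)\in\mathbb{R}$ is locally Lipschitz continuous.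
   Context: Standing Setting: Let $d,H,\mathfrak d\in\mathbb{N}$ with $\mathfrak d=dH+2H+1$, let $a\in\mathbb{R}$, $b\in(a,\infty)$, $f\in C([a,b]^d,\mathbb{R})$, and let $p\colon[a,b]^d\to[0,\infty)$ be bounded and measurable. Let $\lambda$ be Lebesgue measure on $\mathbb{R}^d$ and $\|\cdot\|$ the Euclidean norm. For $\theta=(\theta_1,\dots,\theta_{\mathfrak d})\in\mathbb{R}^{\mathfrak d}$, $i\in\{1,\dots,H\}$, $j\in\{1,\dots,d\}$ write $w^\theta_{i,j}=\theta_{(i-1)d+j}$, $b^\theta_i=\theta_{Hd+i}$, $v^\theta_i=\theta_{H(d+1)+i}$, $c^\theta=\theta_{\mathfrak d}$. Define $\mathcal N^\theta(x)=c^\theta+\sum_{i=1}^H v^\theta_i\max\{b^\theta_i+\sum_{j=1}^d w^\theta_{i,j}x_j,0\}$ for $x\in\mathbb{R}^d$ and the risk $\mathcal L(\theta)=\int_{[a,b]^d}(f(y)-\mathcal N^\theta(y))^2p(y)\,\lambda(\mathrm{d}y)$. Let $\mathfrak R_r\in C^1(\mathbb{R},\mathbb{R})$, $r\in\mathbb{N}$, satisfy for all $x\in\mathbb{R}$ that $\lim_{r\to\infty}\big(|\mathfrak R_r(x)-\max\{x,0\}|+|(\mathfrak R_r)'(x)-\mathbb 1_{(0,\infty)}(x)|\big)=0$ and $\sup_{r\in\mathbb{N}}\sup_{y\in[-|x|,|x|]}|(\mathfrak R_r)'(y)|<\infty$, and let $\mathfrak L_r(\theta)=\int_{[a,b]^d}\big(f(y)-c^\theta-\sum_{i=1}^H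 v^\theta_i\,\mathfrak R_r(b^\theta_i+\sum_{j=1}^d w^\theta_{i,j}y_j)\big)^2p(y)\,\lambda(\mathrm{d}y)$. Let $\mathcal G=(\mathcal G_1,\dots,\mathcal G_{\mathfrak d})\colon\mathbb{R}^{\mathfrak d}\to\mathbb{R}^{\mathfrak d}$ satisfy $\mathcal G(\theta)=\lim_{r\to\infty}(\nabla\mathfrak L_r)(\theta)$ for every $\theta$ at which this limit exists. For $\theta\in\mathbb{R}^{\mathfrak d}$, $i\in\{1,\dots,H\}$ let $I_i^\theta=\{x\in[a,b]^d\colon b^\theta_i+\sum_{j=1}^d w^\theta_{i,j}x_j>0\}$ and let $\mathbf D^\theta=\{i\in\{1,\dots,H\}\colon |b^\theta_i|+\sum_{j=1}^d|w^\theta_{i,j}|=0\}$ (the set of degenerate hidden neurons). For $\varepsilon>0$, $B_\varepsilon(\theta)=\{\vartheta\in\mathbb{R}^{\mathfrak d}\colon\|\theta-\vartheta\|<\varepsilon\}$. *)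

theory Defs
  imports "HOL-Analysis.Analysis"
begin

text \<open>Parameter vectors theta in R^{dH+2H+1}, arranged as (w, b, v, c) with
  w :: real^d^H (w $ i $ j = w_{i,j}), b, v :: real^H, c :: real.
  The product norm equals the Euclidean norm of the flattened vector.\<close>
type_synonym ('d, 'h) params = "(real^'d^'h) \<times> (real^'h) \<times> (real^'h) \<times> real"

definition wgt :: "('d::finite, 'h::finite) params \<Rightarrow> 'h \<Rightarrow> 'd \<Rightarrow> real"
  where "wgt \<theta> i j = (fst \<theta>) $ i $ j"

definition bias :: "('d::finite, 'h::finite) params \<Rightarrow> 'h \<Rightarrow> real"
  where "bias \<theta> i = (fst (snd \<theta>)) $ i"

definition cube :: "real \<Rightarrow> real \<Rightarrow> (real^'d::finite) set"
  where "cube a b = cbox (\<chi> j. a) (\<chi> j. b)"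

definition active_set :: "real \<Rightarrow> real \<Rightarrow> ('d::finite, 'h::finite) params \<Rightarrow> 'h \<Rightarrow> (real^'d) set"
  where "active_set a b \<theta> i = {x \<in> cube a b. bias \<theta> i + (\<Sum>j\<in>UNIV. wgt \<theta> i j * x $ j) > 0}"

definition degenerate :: "('d::finite, 'h::finite) params \<Rightarrow> 'h set"
  where "degenerate \<theta> = {i. \<bar>bias \<theta> i\<bar> + (\<Sum>j\<in>UNIV. \<bar>wgt \<theta> i j\<bar>) = 0}"

definition locally_lipschitz_on :: "'a::metric_space set \<Rightarrow> ('a \<Rightarrow> 'b::metric_space) \<Rightarrow> bool"
  where "locally_lipschitz_on S F \<longleftrightarrow>
    (\<forall>x\<in>S. \<exists>e>0. \<exists>L. L-lipschitz_on (ball x e \<inter> S) F)"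

end

theory Submission
  imports Defs
begin

text \<open>For parameters near \<open>\<theta>\<^sub>0\<close>, the difference of two integrals over moving domains
  \<open>A \<theta>\<close> and \<open>A \<eta>\<close> splits into the difference of the integrands on the common part,
  bounded by the locally uniform Lipschitz constant of \<open>\<phi>\<close>, and the integral over the
  symmetric difference of the domains, bounded by the sup of \<open>\<phi> p\<close> times its measure.
  For the whole cube the second term vanishes. For the active set of a non-degenerate neuron,
  either all weights vanish near \<open>\<theta>\<^sub>0\<close> and the active set is locally constant, or some
  weight \<open>w\<^sub>i\<^sub>j\<close> stays away from zero; then the symmetric difference lies in a slab
  \<open>\<bar>b\<^sub>i + w\<^sub>i \<bullet> x\<bar> \<le> K \<parallel>\<theta> - \<eta>\<parallel>\<close>, whose volume is \<open>O(\<parallel>\<theta> - \<eta>\<parallel> / \<bar>w\<^sub>i\<^sub>j\<bar>)\<close>.\<close>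

section \<open>Integrals over parameter-dependent domains\<close>

lemma set_integrable_mult_bounded:
  fixes h p :: "'a \<Rightarrow> real"
  assumes C: "C \<in> sets M" "emeasure M C < \<infinity>" and A: "A \<subseteq> C" "A \<in> sets M"
    and meas: "(\<lambda>x. indicator C x * h x) \<in> borel_measurable M"
      "(\<lambda>x. indicator C x * p x) \<in> borel_measurable M"
    and bdd: "\<forall>x\<in>C. \<bar>h x\<bar> \<le> K" "\<forall>x\<in>C. \<bar>p x\<bar> \<le> B"
  shows "set_integrable M A (\<lambda>x. h x * p x)"
  unfolding set_integrable_def
proof (rule integrableI_bounded_set[where A = C and B = "K * B"])
  have "(\<lambda>x. indicator A x *\<^sub>R (h x * p x))
      = (\<lambda>x. indicator A x * (indicator C x * h x) * (indicator C x * p x))"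
    using A(1) by (auto simp: indicator_def fun_eq_iff)
  then show "(\<lambda>x. indicator A x *\<^sub>R (h x * p x)) \<in> borel_measurable M"
    using A(2) meas by simp
  have "norm (indicator A x *\<^sub>R (h x * p x)) \<le> \<bar>h x\<bar> * \<bar>p x\<bar>" for x
    by (simp add: indicator_def abs_mult)
  moreover have "\<bar>h x\<bar> * \<bar>p x\<bar> \<le> K * B" if "x \<in> C" for x
    using bdd that by (intro mult_mono) auto
  ultimately show "AE x in M. x \<in> C \<longrightarrow> norm (indicator A x *\<^sub>R (h x * p x)) \<le> K * B"
    by (intro AE_I2) (blast intro: order_trans)
qed (use C A in \<open>auto simp: indicator_def\<close>)

lemma abs_set_integral_diff_le:
  fixes f g p :: "'a \<Rightarrow> real"
  assumes C: "C \<in> sets M" "emeasure M C < \<infinity>"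
    and A: "A1 \<subseteq> C" "A2 \<subseteq> C" "A1 \<in> sets M" "A2 \<in> sets M"
    and meas: "(\<lambda>x. indicator C x * f x) \<in> borel_measurable M"
      "(\<lambda>x. indicator C x * g x) \<in> borel_measurable M"
      "(\<lambda>x. indicator C x * p x) \<in> borel_measurable M"
    and D: "\<forall>x\<in>C. \<bar>f x - g x\<bar> \<le> D" and B: "\<forall>x\<in>C. \<bar>g x\<bar> \<le> B"
    and p: "\<forall>x\<in>C. 0 \<le> p x \<and> p x \<le> Bp"
  shows "\<bar>(LINT x:A1|M. f x * p x) - (LINT x:A2|M. g x * p x)\<bar>
     \<le> D * Bp * measure M C + B * Bp * measure M ((A1 - A2) \<union> (A2 - A1))"
proof -
  define E where "E = (A1 - A2) \<union> (A2 - A1)"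
  have E: "E \<in> sets M" "E \<subseteq> C" using A unfolding E_def by auto
  have "emeasure M E < \<infinity>"
    using emeasure_mono[OF E(2) C(1)] C(2) by (simp add: top.extremum_strict less_le_trans)
  then have int_E: "integrable M (indicat_real E)" by (rule integrable_real_indicator[OF E(1)])
  have int_C: "integrable M (indicat_real C)" using C by (rule integrable_real_indicator)
  have p': "\<forall>x\<in>C. \<bar>p x\<bar> \<le> Bp" using p by auto
  have "\<forall>x\<in>C. \<bar>f x\<bar> \<le> D + B" using D B by force
  then have int1: "set_integrable M A1 (\<lambda>x. f x * p x)"
    using set_integrable_mult_bounded[OF C A(1,3) meas(1,3)] p' by blast
  have int2: "set_integrable M A2 (\<lambda>x. g x * p x)"
    using set_integrable_mult_bounded[OF C A(2,4) meas(2,3) B p'] .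
  have pointwise: "\<bar>indicator A1 x * (f x * p x) - indicator A2 x * (g x * p x)\<bar>
      \<le> indicator C x * (D * Bp) + indicator E x * (B * Bp)" for x
  proof (cases "x \<in> C")
    case False
    then show ?thesis using A E(2) by (auto simp: indicator_def)
  next
    case True
    then have "0 \<le> p x" "p x \<le> Bp" "\<bar>f x - g x\<bar> \<le> D" "\<bar>g x\<bar> \<le> B" using p D B by auto
    moreover from this have "\<bar>f x - g x\<bar> * p x \<le> D * Bp" "\<bar>g x\<bar> * p x \<le> B * Bp"
      by (auto intro!: mult_mono)
    moreover have "\<bar>f x * p x - g x * p x\<bar> = \<bar>f x - g x\<bar> * p x" "\<bar>g x * p x\<bar> = \<bar>g x\<bar> * p x"
      using \<open>0 \<le> p x\<close> by (simp_all add: left_diff_distrib[symmetric] abs_mult)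
    ultimately show ?thesis using True unfolding E_def
      by (cases "x \<in> A1"; cases "x \<in> A2"; simp add: indicator_def)
  qed
  have "\<bar>(LINT x:A1|M. f x * p x) - (LINT x:A2|M. g x * p x)\<bar>
      = \<bar>LINT x|M. indicator A1 x * (f x * p x) - indicator A2 x * (g x * p x)\<bar>"
    using int1 int2 unfolding set_lebesgue_integral_def set_integrable_def by simp
  also have "\<dots> \<le> (LINT x|M. \<bar>indicator A1 x * (f x * p x) - indicator A2 x * (g x * p x)\<bar>)"
    using integral_norm_bound[of M "\<lambda>x. indicator A1 x * (f x * p x) - indicator A2 x * (g x * p x)"]
    by simp
  also have "\<dots> \<le> (LINT x|M. indicator C x * (D * Bp) + indicator E x * (B * Bp))"
  proof (rule integral_mono)
    show "integrable M (\<lambda>x. \<bar>indicator A1 x * (f x * p x) - indicator A2 x * (g x * p x)\<bar>)"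
      using int1 int2 unfolding set_integrable_def by (simp add: integrable_abs)
    show "integrable M (\<lambda>x. indicator C x * (D * Bp) + indicator E x * (B * Bp))"
      using int_C int_E by simp
  qed (rule pointwise)
  also have "\<dots> = D * Bp * measure M C + B * Bp * measure M E"
    using int_C int_E C(1) E(1) by (simp add: sets.Int_space_eq2 mult_ac)
  finally show ?thesis unfolding E_def .
qed

lemma locally_lipschitz_on_set_integral:
  fixes \<phi> :: "'a::metric_space \<Rightarrow> 'b \<Rightarrow> real" and A :: "'a \<Rightarrow> 'b set"
  assumes C: "C \<in> sets M" "emeasure M C < \<infinity>"
    and A: "\<And>\<theta>. \<theta> \<in> S \<Longrightarrow> A \<theta> \<subseteq> C \<and> A \<theta> \<in> sets M"
    and meas_\<phi>: "\<And>\<theta>. (\<lambda>x. indicator C x * \<phi> \<theta> x) \<in> borel_measurable M"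
    and meas_p: "(\<lambda>x. indicator C x * p x) \<in> borel_measurable M"
    and p_nonneg: "\<forall>x\<in>C. 0 \<le> p x" and p_bdd: "\<exists>B. \<forall>x\<in>C. \<bar>p x\<bar> \<le> B"
    and \<phi>_bdd: "\<And>\<theta>\<^sub>0. \<theta>\<^sub>0 \<in> S \<Longrightarrow> \<exists>e>0. \<exists>B. \<forall>\<theta>\<in>ball \<theta>\<^sub>0 e. \<forall>x\<in>C. \<bar>\<phi> \<theta> x\<bar> \<le> B"
    and \<phi>_lip: "\<And>\<theta>\<^sub>0. \<theta>\<^sub>0 \<in> S \<Longrightarrow> \<exists>e>0. \<exists>L\<ge>0. \<forall>\<theta>\<in>ball \<theta>\<^sub>0 e. \<forall>\<eta>\<in>ball \<theta>\<^sub>0 e.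
        \<forall>x\<in>C. \<bar>\<phi> \<theta> x - \<phi> \<eta> x\<bar> \<le> L * dist \<theta> \<eta>"
    and A_lip: "\<And>\<theta>\<^sub>0. \<theta>\<^sub>0 \<in> S \<Longrightarrow> \<exists>e>0. \<exists>L\<ge>0. \<forall>\<theta>\<in>ball \<theta>\<^sub>0 e. \<forall>\<eta>\<in>ball \<theta>\<^sub>0 e.
        measure M ((A \<theta> - A \<eta>) \<union> (A \<eta> - A \<theta>)) \<le> L * dist \<theta> \<eta>"
  shows "locally_lipschitz_on S (\<lambda>\<theta>. LINT x:A \<theta>|M. \<phi> \<theta> x * p x)"
  unfolding locally_lipschitz_on_def
proof
  fix \<theta>\<^sub>0 assume "\<theta>\<^sub>0 \<in> S"
  obtain e\<^sub>1 B where e\<^sub>1: "e\<^sub>1 > 0" and B: "\<forall>\<theta>\<in>ball \<theta>\<^sub>0 e\<^sub>1. \<forall>x\<in>C. \<bar>\<phi> \<theta> x\<bar> \<le> B"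
    using \<phi>_bdd[OF \<open>\<theta>\<^sub>0 \<in> S\<close>] by blast
  obtain e\<^sub>2 L where e\<^sub>2: "e\<^sub>2 > 0" and L: "L \<ge> 0"
    and lip: "\<forall>\<theta>\<in>ball \<theta>\<^sub>0 e\<^sub>2. \<forall>\<eta>\<in>ball \<theta>\<^sub>0 e\<^sub>2. \<forall>x\<in>C. \<bar>\<phi> \<theta> x - \<phi> \<eta> x\<bar> \<le> L * dist \<theta> \<eta>"
    using \<phi>_lip[OF \<open>\<theta>\<^sub>0 \<in> S\<close>] by blast
  obtain e\<^sub>3 L\<^sub>A where e\<^sub>3: "e\<^sub>3 > 0" and L\<^sub>A: "L\<^sub>A \<ge> 0"
    and A_lip': "\<forall>\<theta>\<in>ball \<theta>\<^sub>0 e\<^sub>3. \<forall>\<eta>\<in>ball \<theta>\<^sub>0 e\<^sub>3.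
        measure M ((A \<theta> - A \<eta>) \<union> (A \<eta> - A \<theta>)) \<le> L\<^sub>A * dist \<theta> \<eta>"
    using A_lip[OF \<open>\<theta>\<^sub>0 \<in> S\<close>] by blast
  obtain B\<^sub>p where B\<^sub>p: "0 \<le> B\<^sub>p" "\<forall>x\<in>C. 0 \<le> p x \<and> p x \<le> B\<^sub>p"
    using p_bdd p_nonneg by (metis abs_le_D1 max.cobounded1 max.coboundedI2)
  define e where "e = min e\<^sub>1 (min e\<^sub>2 e\<^sub>3)"
  define K where "K = L * B\<^sub>p * measure M C + max B 0 * B\<^sub>p * L\<^sub>A"
  show "\<exists>e>0. \<exists>K. K-lipschitz_on (ball \<theta>\<^sub>0 e \<inter> S) (\<lambda>\<theta>. LINT x:A \<theta>|M. \<phi> \<theta> x * p x)"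
  proof (intro exI conjI lipschitz_onI)
    show "0 < e" using e\<^sub>1 e\<^sub>2 e\<^sub>3 by (simp add: e_def)
    show "0 \<le> K" using L L\<^sub>A B\<^sub>p by (simp add: K_def)
    fix \<theta> \<eta> assume \<theta>: "\<theta> \<in> ball \<theta>\<^sub>0 e \<inter> S" and \<eta>: "\<eta> \<in> ball \<theta>\<^sub>0 e \<inter> S"
    then have A\<theta>: "A \<theta> \<subseteq> C" "A \<theta> \<in> sets M" and A\<eta>: "A \<eta> \<subseteq> C" "A \<eta> \<in> sets M" using A by auto
    have "\<forall>x\<in>C. \<bar>\<phi> \<theta> x - \<phi> \<eta> x\<bar> \<le> L * dist \<theta> \<eta>" "\<forall>x\<in>C. \<bar>\<phi> \<eta> x\<bar> \<le> max B 0"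
      using lip B \<theta> \<eta> by (force simp: e_def)+
    then have "\<bar>(LINT x:A \<theta>|M. \<phi> \<theta> x * p x) - (LINT x:A \<eta>|M. \<phi> \<eta> x * p x)\<bar>
        \<le> L * dist \<theta> \<eta> * B\<^sub>p * measure M C + max B 0 * B\<^sub>p * measure M ((A \<theta> - A \<eta>) \<union> (A \<eta> - A \<theta>))"
      by (intro abs_set_integral_diff_le[OF C A\<theta>(1) A\<eta>(1) A\<theta>(2) A\<eta>(2) meas_\<phi> meas_\<phi> meas_p _ _ B\<^sub>p(2)])
    also have "\<dots> \<le> L * dist \<theta> \<eta> * B\<^sub>p * measure M C + max B 0 * B\<^sub>p * (L\<^sub>A * dist \<theta> \<eta>)"
      using A_lip' \<theta> \<eta> B\<^sub>p by (intro add_left_mono mult_left_mono) (auto simp: e_def)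
    finally show "dist (LINT x:A \<theta>|M. \<phi> \<theta> x * p x) (LINT x:A \<eta>|M. \<phi> \<eta> x * p x) \<le> K * dist \<theta> \<eta>"
      by (simp add: K_def dist_real_def algebra_simps)
  qed
qed

lemma borel_measurable_indicator_section:
  fixes \<phi> :: "'a::topological_space \<Rightarrow> 'b::euclidean_space \<Rightarrow> real"
  assumes \<phi>: "(\<lambda>z. \<phi> (fst z) (snd z)) \<in> borel_measurable (restrict_space borel (UNIV \<times> K))"
    and K: "K \<in> sets borel"
  shows "(\<lambda>x. indicator K x * \<phi> \<theta> x) \<in> borel_measurable lborel"
proof -
  have "(\<lambda>x. (\<theta>, x)) \<in> borel \<rightarrow>\<^sub>M borel"
    by (intro borel_measurable_continuous_onI continuous_intros)
  then have "(\<lambda>x. (\<theta>, x)) \<in> restrict_space borel K \<rightarrow>\<^sub>M restrict_space borel (UNIV \<times> K)"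
    by (rule measurable_restrict_space3) auto
  from measurable_comp[OF this \<phi>]
  have "\<phi> \<theta> \<in> borel_measurable (restrict_space borel K)" by (simp add: o_def)
  then have "(\<lambda>x. indicator K x *\<^sub>R \<phi> \<theta> x) \<in> borel_measurable borel"
    using K by (subst (asm) borel_measurable_restrict_space_iff) auto
  then show ?thesis by simp
qed

lemma uniform_lipschitz_on_ball:
  fixes \<phi> :: "'a::real_normed_vector \<Rightarrow> 'b \<Rightarrow> real"
  assumes "\<forall>r>0. \<exists>L. \<forall>\<theta> \<eta>. norm \<theta> + norm \<eta> \<le> r \<and> \<theta> \<noteq> \<eta> \<longrightarrow>
      (\<forall>x\<in>C. \<bar>\<phi> \<theta> x - \<phi> \<eta> x\<bar> / norm (\<theta> - \<eta>) \<le> L)"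
  shows "\<exists>L\<ge>0. \<forall>\<theta>\<in>ball \<theta>\<^sub>0 e. \<forall>\<eta>\<in>ball \<theta>\<^sub>0 e. \<forall>x\<in>C. \<bar>\<phi> \<theta> x - \<phi> \<eta> x\<bar> \<le> L * dist \<theta> \<eta>"
proof -
  have "0 < 2 * (norm \<theta>\<^sub>0 + \<bar>e\<bar>) + 1" by (intro add_nonneg_pos) simp_all
  then obtain L where L: "\<forall>\<theta> \<eta>. norm \<theta> + norm \<eta> \<le> 2 * (norm \<theta>\<^sub>0 + \<bar>e\<bar>) + 1 \<and> \<theta> \<noteq> \<eta> \<longrightarrow>
      (\<forall>x\<in>C. \<bar>\<phi> \<theta> x - \<phi> \<eta> x\<bar> / norm (\<theta> - \<eta>) \<le> L)"
    using assms by blast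
  have "\<bar>\<phi> \<theta> x - \<phi> \<eta> x\<bar> \<le> max L 0 * dist \<theta> \<eta>"
    if \<theta>: "\<theta> \<in> ball \<theta>\<^sub>0 e" and \<eta>: "\<eta> \<in> ball \<theta>\<^sub>0 e" and x: "x \<in> C" for \<theta> \<eta> x
  proof (cases "\<theta> = \<eta>")
    case False
    have "norm \<theta> \<le> norm \<theta>\<^sub>0 + \<bar>e\<bar>" "norm \<eta> \<le> norm \<theta>\<^sub>0 + \<bar>e\<bar>"
      using \<theta> \<eta> norm_triangle_sub[of \<theta> \<theta>\<^sub>0] norm_triangle_sub[of \<eta> \<theta>\<^sub>0]
      by (auto simp: dist_norm norm_minus_commute)
    then have "\<bar>\<phi> \<theta> x - \<phi> \<eta> x\<bar> / dist \<theta> \<eta> \<le> L" using L False x by (simp add: dist_norm)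
    then have "\<bar>\<phi> \<theta> x - \<phi> \<eta> x\<bar> \<le> L * dist \<theta> \<eta>" using False by (simp add: pos_divide_le_eq)
    also have "\<dots> \<le> max L 0 * dist \<theta> \<eta>" by (intro mult_right_mono) auto
    finally show ?thesis .
  qed simp
  then show ?thesis by (intro exI[of _ "max L 0"]) auto
qed

section \<open>Volume of slabs\<close>

lemma lmeasurable_slab:
  fixes w :: "real^'d::finite"
  shows "{x \<in> cube a b. \<bar>c + (\<Sum>k\<in>UNIV. w$k * x$k)\<bar> \<le> \<delta>} \<in> lmeasurable"
proof -
  have "closed {x::real^'d. \<bar>c + (\<Sum>k\<in>UNIV. w$k * x$k)\<bar> \<le> \<delta>}"
    by (intro closed_Collect_le continuous_intros)
  then have "compact (cube a b \<inter> {x::real^'d. \<bar>c + (\<Sum>k\<in>UNIV. w$k * x$k)\<bar> \<le> \<delta>})"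
    unfolding cube_def by (rule compact_Int_closed[OF compact_cbox])
  then show ?thesis
    by (simp add: Int_def lmeasurable_compact)
qed

lemma measure_cbox_cart:
  fixes l u :: "real^'d::finite"
  assumes "\<And>k. l$k \<le> u$k"
  shows "measure lebesgue (cbox l u) = (\<Prod>k\<in>UNIV. u$k - l$k)"
proof -
  have "l \<in> cbox l u" using assms by (simp add: mem_box_cart)
  then have "cbox l u \<noteq> {}" by blast
  then show ?thesis by (simp add: measure_completion content_cbox_cart[symmetric])
qed

text \<open>Translating a slab of width \<open>2\<delta>\<close> along the \<open>j\<close>-th axis by multiples of a step larger
  than \<open>2\<delta>/\<bar>w$j\<bar>\<close> gives \<open>N\<close> pairwise disjoint copies inside a box that is longer by \<open>N t\<close>
  in direction \<open>j\<close>.\<close>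
lemma measure_slab_translates_le:
  fixes w :: "real^'d::finite"
  assumes ab: "a < b" and t: "0 < t" and step: "2*\<delta> < t*\<bar>w$j\<bar>"
  shows "real N * measure lebesgue {x \<in> cube a b. \<bar>c + (\<Sum>k\<in>UNIV. w$k * x$k)\<bar> \<le> \<delta>}
          \<le> (b - a + real N * t) * (b-a)^(CARD('d)-1)"
proof -
  define S where "S = {x \<in> cube a b. \<bar>c + (\<Sum>k\<in>UNIV. w$k * x$k)\<bar> \<le> \<delta>}"
  define e :: "real^'d" where "e = axis j 1"
  define T where "T = (\<lambda>k::nat. (+) ((real k * t) *\<^sub>R e) ` S)"
  have shift: "(s *\<^sub>R e + x)$l = x$l + (if l = j then s else 0)" for s x l
    unfolding e_def by (simp add: axis_def)
  have wshift: "(\<Sum>k\<in>UNIV. w$k * (s *\<^sub>R e + x)$k) = (\<Sum>k\<in>UNIV. w$k * x$k) + s * w$j" for s x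
  proof -
    have "(\<Sum>k\<in>UNIV. w$k * (s *\<^sub>R e + x)$k) = (\<Sum>k\<in>UNIV. w$k * x$k + (if k = j then s * w$j else 0))"
      by (rule sum.cong) (auto simp: e_def axis_def algebra_simps)
    then show ?thesis by (simp add: sum.distrib)
  qed
  have S: "S \<in> lmeasurable" unfolding S_def by (rule lmeasurable_slab)
  have T: "T k \<in> lmeasurable" for k unfolding T_def by (rule measurable_translation[OF S])
  have disjoint: "disjoint_family_on T {..<N}"
    unfolding disjoint_family_on_def
  proof (intro ballI impI)
    fix k m :: nat assume km: "k \<noteq> m"
    show "T k \<inter> T m = {}"
    proof (rule ccontr)
      assume "T k \<inter> T m \<noteq> {}"
      then obtain x x' where x: "x \<in> S" "x' \<in> S"
        and eq: "(real k * t) *\<^sub>R e + x = (real m * t) *\<^sub>R e + x'"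
        unfolding T_def by auto
      have "(\<Sum>l\<in>UNIV. w$l * x$l) + real k * t * w$j = (\<Sum>l\<in>UNIV. w$l * x'$l) + real m * t * w$j"
        using arg_cong[OF eq, of "\<lambda>y. \<Sum>l\<in>UNIV. w$l * y$l"] unfolding wshift .
      then have "(real k - real m) * t * w$j = (\<Sum>l\<in>UNIV. w$l * x'$l) - (\<Sum>l\<in>UNIV. w$l * x$l)"
        by (simp add: algebra_simps)
      moreover have "\<bar>c + (\<Sum>l\<in>UNIV. w$l * x$l)\<bar> \<le> \<delta>" "\<bar>c + (\<Sum>l\<in>UNIV. w$l * x'$l)\<bar> \<le> \<delta>"
        using x unfolding S_def by auto
      ultimately have close: "\<bar>(real k - real m) * t * w$j\<bar> \<le> 2*\<delta>"
        by (simp add: abs_le_iff)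
      have "1 \<le> \<bar>real k - real m\<bar>" using km by linarith
      then have "t*\<bar>w$j\<bar> \<le> \<bar>real k - real m\<bar> * (t*\<bar>w$j\<bar>)"
        using mult_right_mono[of 1 _ "t*\<bar>w$j\<bar>"] t by simp
      also have "\<dots> = \<bar>(real k - real m) * t * w$j\<bar>" using t by (simp add: abs_mult)
      finally show False using close step by linarith
    qed
  qed
  define l :: "real^'d" where "l = (\<chi> k. a)"
  define u :: "real^'d" where "u = (\<chi> k. if k = j then b + real N * t else b)"
  have union_box: "(\<Union>k\<in>{..<N}. T k) \<subseteq> cbox l u"
  proof
    fix y assume "y \<in> (\<Union>k\<in>{..<N}. T k)"
    then obtain k x where k: "k < N" and x: "x \<in> S" and y: "y = (real k * t) *\<^sub>R e + x"
      unfolding T_def by auto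
    have "a \<le> x$l \<and> x$l \<le> b" for l using x unfolding S_def cube_def mem_box_cart by auto
    moreover have "real k * t \<le> real N * t" using k t by (intro mult_right_mono) auto
    ultimately show "y \<in> cbox l u" unfolding mem_box_cart y shift l_def u_def
      using t by (auto simp: add_increasing2 add_mono)
  qed
  have "real N * measure lebesgue S = (\<Sum>k\<in>{..<N}. measure lebesgue (T k))"
    unfolding T_def by (simp add: measure_translation)
  also have "\<dots> = measure lebesgue (\<Union>k\<in>{..<N}. T k)"
  proof (rule measure_finite_Union[symmetric])
    show "T ` {..<N} \<subseteq> sets lebesgue" using T by (auto dest: fmeasurableD)
    show "emeasure lebesgue (T k) \<noteq> \<infinity>" for k
      using T[of k] by (auto simp: fmeasurable_def)
  qed (use disjoint in auto)
  also have "\<dots> \<le> measure lebesgue (cbox l u)"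
    using T union_box by (intro measure_mono_fmeasurable) auto
  also have "\<dots> = (\<Prod>k\<in>UNIV. u$k - l$k)"
    using ab t by (intro measure_cbox_cart) (auto simp: l_def u_def intro!: add_increasing2)
  also have "\<dots> = (u$j - l$j) * (\<Prod>k\<in>UNIV-{j}. b - a)"
    by (subst prod.remove[of _ j]) (auto simp: l_def u_def intro!: prod.cong)
  also have "\<dots> = (b - a + real N * t) * (b-a)^(CARD('d)-1)"
    by (simp add: l_def u_def card_Diff_singleton)
  finally show ?thesis unfolding S_def .
qed

lemma measure_slab_le:
  fixes w :: "real^'d::finite"
  assumes wj: "w$j \<noteq> 0" and ab: "a < b" and \<delta>: "0 \<le> \<delta>"
  shows "measure lebesgue {x \<in> cube a b. \<bar>c + (\<Sum>k\<in>UNIV. w$k * x$k)\<bar> \<le> \<delta>}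
          \<le> 2*\<delta>*(b-a)^(CARD('d)-1) / \<bar>w$j\<bar>"
proof -
  define m where "m = measure lebesgue {x \<in> cube a b. \<bar>c + (\<Sum>k\<in>UNIV. w$k * x$k)\<bar> \<le> \<delta>}"
  define P where "P = (b-a)^(CARD('d)-1)"
  have P: "0 < P" unfolding P_def using ab by simp
  have bound: "m \<le> P * t" if t: "2*\<delta>/\<bar>w$j\<bar> < t" for t
  proof (rule ccontr)
    assume "\<not> m \<le> P * t"
    then have "0 < m - P * t" by simp
    from reals_Archimedean3[OF this] obtain N where N: "(b-a) * P < real N * (m - P * t)"
      by blast
    have step: "2*\<delta> < t*\<bar>w$j\<bar>" using t wj by (simp add: divide_less_eq)
    have "0 \<le> 2*\<delta>/\<bar>w$j\<bar>" using \<delta> by simp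
    then have "0 < t" using t by linarith
    have "real N * m \<le> (b - a + real N * t) * P"
      using measure_slab_translates_le[OF ab \<open>0 < t\<close> step] unfolding m_def P_def .
    moreover have "real N * (m - P * t) = real N * m - real N * t * P"
      "(b - a + real N * t) * P = (b - a) * P + real N * t * P"
      by (simp_all add: algebra_simps)
    ultimately show False using N by linarith
  qed
  have "m / P \<le> 2*\<delta>/\<bar>w$j\<bar>"
  proof (rule dense_ge)
    fix t assume "2*\<delta>/\<bar>w$j\<bar> < t"
    then have "m \<le> P * t" by (rule bound)
    then show "m / P \<le> t" using P by (simp add: pos_divide_le_eq mult.commute)
  qed
  then have "m \<le> 2*\<delta>/\<bar>w$j\<bar> * P" using P by (simp add: pos_divide_le_eq)
  then show ?thesis unfolding m_def P_def by simp
qed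

section \<open>Preactivations and active sets\<close>

lemma cube_borel: "cube a b \<in> sets lborel"
  and emeasure_cube_finite: "emeasure lborel (cube a b) < \<infinity>"
  unfolding cube_def by (simp add: cbox_borel) (rule emeasure_lborel_cbox_finite)

lemma abs_cube_component_le: "x \<in> cube a b \<Longrightarrow> \<bar>x$j\<bar> \<le> \<bar>a\<bar> + \<bar>b\<bar>"
  unfolding cube_def mem_box_cart by (simp add: abs_le_iff) (smt (verit) abs_ge_self abs_ge_minus_self)

definition preactivation :: "('d::finite, 'h::finite) params \<Rightarrow> 'h \<Rightarrow> real^'d \<Rightarrow> real"
  where "preactivation \<theta> i x = bias \<theta> i + (\<Sum>j\<in>UNIV. wgt \<theta> i j * x $ j)"

lemma active_set_eq: "active_set a b \<theta> i = {x \<in> cube a b. 0 < preactivation \<theta> i x}"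
  unfolding active_set_def preactivation_def ..

lemma active_set_subset_cube: "active_set a b \<theta> i \<subseteq> cube a b"
  unfolding active_set_def by blast

lemma active_set_borel: "active_set a b \<theta> i \<in> sets lborel"
proof -
  have eq: "active_set a b \<theta> i = cube a b \<inter> {x. 0 < preactivation \<theta> i x}"
    unfolding active_set_eq by blast
  have "open {x. 0 < preactivation \<theta> i x}"
    unfolding preactivation_def by (intro open_Collect_less continuous_intros)
  then show ?thesis
    unfolding eq using cube_borel[of a b] by (intro sets.Int) (auto intro: borel_open)
qed

lemma norm_fst_le_norm: "norm (fst z) \<le> norm z"
  using norm_fst_le[of "fst z" "snd z"] by simp

lemma norm_snd_le_norm: "norm (snd z) \<le> norm z"
  using norm_snd_le[of "snd z" "fst z"] by simp

lemma abs_bias_diff_le: "\<bar>bias \<theta> i - bias \<eta> i\<bar> \<le> dist \<theta> \<eta>"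
proof -
  have "\<bar>fst (snd (\<theta> - \<eta>)) $ i\<bar> \<le> norm (fst (snd (\<theta> - \<eta>)))" by (rule component_le_norm_cart)
  also have "\<dots> \<le> norm (snd (\<theta> - \<eta>))" by (rule norm_fst_le_norm)
  also have "\<dots> \<le> norm (\<theta> - \<eta>)" by (rule norm_snd_le_norm)
  finally show ?thesis unfolding bias_def dist_norm by simp
qed

lemma abs_wgt_diff_le: "\<bar>wgt \<theta> i j - wgt \<eta> i j\<bar> \<le> dist \<theta> \<eta>"
proof -
  have "\<bar>fst (\<theta> - \<eta>) $ i $ j\<bar> \<le> norm (fst (\<theta> - \<eta>) $ i)" by (rule component_le_norm_cart)
  also have "\<dots> \<le> norm (fst (\<theta> - \<eta>))" by (rule Finite_Cartesian_Product.norm_nth_le)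
  also have "\<dots> \<le> norm (\<theta> - \<eta>)" by (rule norm_fst_le_norm)
  finally show ?thesis unfolding wgt_def dist_norm by simp
qed

lemma abs_preactivation_diff_le:
  fixes \<theta> \<eta> :: "('d::finite, 'h::finite) params"
  assumes x: "x \<in> cube a b"
  shows "\<bar>preactivation \<theta> i x - preactivation \<eta> i x\<bar>
     \<le> (1 + real CARD('d) * (\<bar>a\<bar> + \<bar>b\<bar>)) * dist \<theta> \<eta>"
proof -
  have "\<bar>\<Sum>j\<in>UNIV. (wgt \<theta> i j - wgt \<eta> i j) * x $ j\<bar> \<le> (\<Sum>j\<in>UNIV. \<bar>(wgt \<theta> i j - wgt \<eta> i j) * x $ j\<bar>)"
    by (rule sum_abs)
  also have "\<dots> \<le> (\<Sum>j\<in>(UNIV::'d set). dist \<theta> \<eta> * (\<bar>a\<bar> + \<bar>b\<bar>))"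
    unfolding abs_mult
    by (intro sum_mono mult_mono abs_wgt_diff_le abs_cube_component_le[OF x]) auto
  finally have "\<bar>\<Sum>j\<in>UNIV. (wgt \<theta> i j - wgt \<eta> i j) * x $ j\<bar> \<le> real CARD('d) * (\<bar>a\<bar> + \<bar>b\<bar>) * dist \<theta> \<eta>"
    by (simp add: mult_ac)
  moreover have "preactivation \<theta> i x - preactivation \<eta> i x
      = (bias \<theta> i - bias \<eta> i) + (\<Sum>j\<in>UNIV. (wgt \<theta> i j - wgt \<eta> i j) * x $ j)"
    by (simp add: preactivation_def sum_subtractf left_diff_distrib)
  moreover have "\<bar>bias \<theta> i - bias \<eta> i\<bar> \<le> dist \<theta> \<eta>" by (rule abs_bias_diff_le)
  ultimately have "\<bar>preactivation \<theta> i x - preactivation \<eta> i x\<bar>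
      \<le> dist \<theta> \<eta> + real CARD('d) * (\<bar>a\<bar> + \<bar>b\<bar>) * dist \<theta> \<eta>"
    using abs_triangle_ineq[of "bias \<theta> i - bias \<eta> i"] by linarith
  then show ?thesis by (simp add: distrib_right)
qed

lemma active_set_symdiff_subset_slab:
  fixes \<theta> \<eta> :: "('d::finite, 'h::finite) params"
  shows "(active_set a b \<theta> i - active_set a b \<eta> i) \<union> (active_set a b \<eta> i - active_set a b \<theta> i)
    \<subseteq> {x \<in> cube a b. \<bar>preactivation \<theta> i x\<bar> \<le> (1 + real CARD('d) * (\<bar>a\<bar> + \<bar>b\<bar>)) * dist \<theta> \<eta>}"
  using abs_preactivation_diff_le[of _ a b \<theta> i \<eta>] by (fastforce simp: active_set_eq abs_le_iff)

lemma measure_active_set_symdiff_le: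
  fixes \<theta>\<^sub>0 \<theta> \<eta> :: "('d::finite, 'h::finite) params"
  assumes ab: "a < b" and \<theta>: "\<theta> \<in> ball \<theta>\<^sub>0 (\<bar>wgt \<theta>\<^sub>0 i j\<bar> / 2)"
  shows "measure lborel ((active_set a b \<theta> i - active_set a b \<eta> i) \<union> (active_set a b \<eta> i - active_set a b \<theta> i))
    \<le> 4 * (1 + real CARD('d) * (\<bar>a\<bar> + \<bar>b\<bar>)) * (b-a)^(CARD('d)-1) / \<bar>wgt \<theta>\<^sub>0 i j\<bar> * dist \<theta> \<eta>"
proof -
  have w\<^sub>0: "0 < \<bar>wgt \<theta>\<^sub>0 i j\<bar>" using \<theta> zero_le_dist[of \<theta>\<^sub>0 \<theta>] unfolding mem_ball by linarith
  define K where "K = 1 + real CARD('d) * (\<bar>a\<bar> + \<bar>b\<bar>)"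
  define w :: "real^'d" where "w = (\<chi> k. wgt \<theta> i k)"
  define E where "E = (active_set a b \<theta> i - active_set a b \<eta> i) \<union> (active_set a b \<eta> i - active_set a b \<theta> i)"
  define S where "S = {x \<in> cube a b. \<bar>bias \<theta> i + (\<Sum>k\<in>UNIV. w$k * x$k)\<bar> \<le> K * dist \<theta> \<eta>}"
  have "\<bar>wgt \<theta> i j - wgt \<theta>\<^sub>0 i j\<bar> < \<bar>wgt \<theta>\<^sub>0 i j\<bar> / 2"
    using abs_wgt_diff_le[of \<theta> i j \<theta>\<^sub>0] \<theta> by (simp add: dist_commute)
  moreover have "\<bar>wgt \<theta>\<^sub>0 i j\<bar> - \<bar>wgt \<theta> i j\<bar> \<le> \<bar>wgt \<theta> i j - wgt \<theta>\<^sub>0 i j\<bar>"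
    using abs_triangle_ineq2[of "wgt \<theta>\<^sub>0 i j" "wgt \<theta> i j"] by (simp add: abs_minus_commute)
  ultimately have w: "\<bar>wgt \<theta>\<^sub>0 i j\<bar> / 2 < \<bar>w$j\<bar>" unfolding w_def by simp
  have "E \<in> sets lborel" unfolding E_def using active_set_borel by blast
  then have "measure lborel E = measure lebesgue E" by (simp add: measure_completion)
  also have "\<dots> \<le> measure lebesgue S"
  proof (rule measure_mono_fmeasurable)
    show "E \<subseteq> S" using active_set_symdiff_subset_slab[of a b \<theta> i \<eta>]
      by (simp add: E_def S_def K_def w_def preactivation_def)
    show "S \<in> lmeasurable" unfolding S_def by (rule lmeasurable_slab)
  qed (use \<open>E \<in> sets lborel\<close> in simp)
  also have "\<dots> \<le> 2 * (K * dist \<theta> \<eta>) * (b-a)^(CARD('d)-1) / \<bar>w$j\<bar>"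
    using w ab unfolding S_def K_def by (intro measure_slab_le) auto
  also have "\<dots> \<le> 2 * (K * dist \<theta> \<eta>) * (b-a)^(CARD('d)-1) / (\<bar>wgt \<theta>\<^sub>0 i j\<bar> / 2)"
    using w w\<^sub>0 ab by (intro divide_left_mono) (auto simp: K_def)
  finally show ?thesis unfolding E_def K_def by (simp add: field_simps)
qed

lemma active_set_locally_constant:
  fixes \<theta>\<^sub>0 \<theta> :: "('d::finite, 'h::finite) params"
  assumes w: "\<And>j. wgt \<theta>\<^sub>0 i j = 0"
    and \<theta>: "\<theta> \<in> ball \<theta>\<^sub>0 (\<bar>bias \<theta>\<^sub>0 i\<bar> / (2 * (1 + real CARD('d) * (\<bar>a\<bar> + \<bar>b\<bar>))))"
  shows "active_set a b \<theta> i = active_set a b \<theta>\<^sub>0 i"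
proof -
  define K where "K = 1 + real CARD('d) * (\<bar>a\<bar> + \<bar>b\<bar>)"
  have K: "0 < K" unfolding K_def by (simp add: add_pos_nonneg)
  have "(0 < preactivation \<theta> i x) = (0 < preactivation \<theta>\<^sub>0 i x)" if x: "x \<in> cube a b" for x
  proof -
    have "\<bar>preactivation \<theta> i x - preactivation \<theta>\<^sub>0 i x\<bar> \<le> K * dist \<theta> \<theta>\<^sub>0"
      unfolding K_def by (rule abs_preactivation_diff_le[OF x])
    also have "\<dots> < \<bar>bias \<theta>\<^sub>0 i\<bar> / 2"
      using \<theta> K by (simp add: K_def dist_commute pos_less_divide_eq algebra_simps)
    finally have "\<bar>preactivation \<theta> i x - preactivation \<theta>\<^sub>0 i x\<bar> < \<bar>bias \<theta>\<^sub>0 i\<bar> / 2" .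
    moreover have "preactivation \<theta>\<^sub>0 i x = bias \<theta>\<^sub>0 i" using w by (simp add: preactivation_def)
    ultimately show ?thesis by (auto simp: abs_less_iff abs_if split: if_splits)
  qed
  then show ?thesis unfolding active_set_eq by auto
qed

lemma active_set_symdiff_locally_lipschitz:
  fixes \<theta>\<^sub>0 :: "('d::finite, 'h::finite) params"
  assumes ab: "a < b" and nondeg: "i \<notin> degenerate \<theta>\<^sub>0"
  shows "\<exists>e>0. \<exists>L\<ge>0. \<forall>\<theta>\<in>ball \<theta>\<^sub>0 e. \<forall>\<eta>\<in>ball \<theta>\<^sub>0 e.
    measure lborel ((active_set a b \<theta> i - active_set a b \<eta> i) \<union> (active_set a b \<eta> i - active_set a b \<theta> i))
      \<le> L * dist \<theta> \<eta>"
proof (cases "\<exists>j. wgt \<theta>\<^sub>0 i j \<noteq> 0")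
  case True
  then obtain j where j: "wgt \<theta>\<^sub>0 i j \<noteq> 0" by blast
  define L where "L = 4 * (1 + real CARD('d) * (\<bar>a\<bar> + \<bar>b\<bar>)) * (b-a)^(CARD('d)-1) / \<bar>wgt \<theta>\<^sub>0 i j\<bar>"
  have "\<forall>\<theta>\<in>ball \<theta>\<^sub>0 (\<bar>wgt \<theta>\<^sub>0 i j\<bar> / 2). \<forall>\<eta>\<in>ball \<theta>\<^sub>0 (\<bar>wgt \<theta>\<^sub>0 i j\<bar> / 2).
      measure lborel ((active_set a b \<theta> i - active_set a b \<eta> i) \<union> (active_set a b \<eta> i - active_set a b \<theta> i))
        \<le> L * dist \<theta> \<eta>"
    unfolding L_def using measure_active_set_symdiff_le[OF ab] by blast
  moreover have "0 < \<bar>wgt \<theta>\<^sub>0 i j\<bar> / 2" using j by simp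
  moreover have "0 \<le> L" unfolding L_def using ab by simp
  ultimately show ?thesis by blast
next
  case False
  define e where "e = \<bar>bias \<theta>\<^sub>0 i\<bar> / (2 * (1 + real CARD('d) * (\<bar>a\<bar> + \<bar>b\<bar>)))"
  have w: "\<And>j. wgt \<theta>\<^sub>0 i j = 0" using False by simp
  have "bias \<theta>\<^sub>0 i \<noteq> 0" using nondeg unfolding degenerate_def by (simp add: w)
  then have "0 < e" unfolding e_def by (simp add: add_pos_nonneg)
  have "active_set a b \<theta> i = active_set a b \<theta>\<^sub>0 i" if "\<theta> \<in> ball \<theta>\<^sub>0 e" for \<theta>
    using that unfolding e_def by (rule active_set_locally_constant[OF w])
  then have "\<forall>\<theta>\<in>ball \<theta>\<^sub>0 e. \<forall>\<eta>\<in>ball \<theta>\<^sub>0 e.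
      measure lborel ((active_set a b \<theta> i - active_set a b \<eta> i) \<union> (active_set a b \<eta> i - active_set a b \<theta> i))
        \<le> 0 * dist \<theta> \<eta>"
    by simp
  with \<open>0 < e\<close> show ?thesis by (meson order_refl)
qed

theorem corollary2p6:
  fixes a b :: real
    and p :: "real^'d::finite \<Rightarrow> real"
    and \<phi> :: "('d, 'h::finite) params \<Rightarrow> real^'d \<Rightarrow> real"
  assumes ab: "a < b"
    and p_nonneg: "\<forall>x\<in>cube a b. 0 \<le> p x"
    and p_bdd: "\<exists>B. \<forall>x\<in>cube a b. \<bar>p x\<bar> \<le> B"
    and p_meas: "set_borel_measurable lborel (cube a b) p"
    and phi_meas: "(\<lambda>z. \<phi> (fst z) (snd z))
                     \<in> borel_measurable (restrict_space borel (UNIV \<times> cube a b))"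
    and phi_locbdd: "\<forall>\<theta>. \<exists>e>0. \<exists>B. \<forall>\<eta>\<in>ball \<theta> e. \<forall>x\<in>cube a b. \<bar>\<phi> \<eta> x\<bar> \<le> B"
    and phi_lip: "\<forall>r>0. \<exists>L. \<forall>\<theta> \<eta>. norm \<theta> + norm \<eta> \<le> r \<and> \<theta> \<noteq> \<eta> \<longrightarrow>
                     (\<forall>x\<in>cube a b. \<bar>\<phi> \<theta> x - \<phi> \<eta> x\<bar> / norm (\<theta> - \<eta>) \<le> L)"
  shows "locally_lipschitz_on UNIV (\<lambda>\<theta>. LINT x : cube a b | lborel. \<phi> \<theta> x * p x)
    \<and> (\<forall>i. locally_lipschitz_on {\<eta>. i \<notin> degenerate \<eta>}
               (\<lambda>\<theta>. LINT x : active_set a b \<theta> i | lborel. \<phi> \<theta> x * p x))"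
proof -
  note cube = cube_borel[of a b] emeasure_cube_finite[of a b]
  have meas_p: "(\<lambda>x. indicator (cube a b) x * p x) \<in> borel_measurable lborel"
    using p_meas unfolding set_borel_measurable_def by simp
  have meas_\<phi>: "(\<lambda>x. indicator (cube a b) x * \<phi> \<theta> x) \<in> borel_measurable lborel" for \<theta>
    using phi_meas cube_borel[of a b] by (intro borel_measurable_indicator_section) simp_all
  have \<phi>_lip: "\<exists>e>0. \<exists>L\<ge>0. \<forall>\<theta>\<in>ball \<theta>\<^sub>0 e. \<forall>\<eta>\<in>ball \<theta>\<^sub>0 e.
      \<forall>x\<in>cube a b. \<bar>\<phi> \<theta> x - \<phi> \<eta> x\<bar> \<le> L * dist \<theta> \<eta>" for \<theta>\<^sub>0
    using uniform_lipschitz_on_ball[OF phi_lip, of \<theta>\<^sub>0 1] zero_less_one by blast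
  note integral_lipschitz =
    locally_lipschitz_on_set_integral[OF cube _ meas_\<phi> meas_p p_nonneg p_bdd _ \<phi>_lip]
  have "locally_lipschitz_on UNIV (\<lambda>\<theta>. LINT x : cube a b | lborel. \<phi> \<theta> x * p x)"
  proof (rule integral_lipschitz)
    show "\<exists>e>0. \<exists>L\<ge>0. \<forall>\<theta>\<in>ball \<theta>\<^sub>0 e. \<forall>\<eta>\<in>ball \<theta>\<^sub>0 e.
        measure lborel ((cube a b - cube a b) \<union> (cube a b - cube a b)) \<le> L * dist \<theta> \<eta>" for \<theta>\<^sub>0
      by (intro exI[of _ 1] conjI) auto
  qed (use cube phi_locbdd in blast)+
  moreover have "locally_lipschitz_on {\<eta>. i \<notin> degenerate \<eta>}
      (\<lambda>\<theta>. LINT x : active_set a b \<theta> i | lborel. \<phi> \<theta> x * p x)" for i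
    by (rule integral_lipschitz)
      (use active_set_subset_cube active_set_borel phi_locbdd active_set_symdiff_locally_lipschitz[OF ab]
        in blast)+
  ultimately show ?thesis by blast
qed

end
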